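(* Let $M=\mathbb{R}/\mathbb{Z}$, $\pi_M:\mathbb{R}\to M$ the canonical projection, $I_0=\pi_M([\tfrac14,\tfrac34])$, and let $f_0:M\to M$ be a $\mathscr{C}^r$ diffeomorphism ($r\ge1$) with $f_0(x)=\tfrac12x+\tfrac14\bmod1$ for $x\in I_0$. Let $(\Omega,\mathcal{F},\mathbb{P})$ be a probability space, $\kappa:\Omega\to\mathbb{R}$ a measurable function with values in $[-1,1]$ $\mathbb{P}$-almost surely, $0<\epsilon<\tfrac18$, and $f_\omega(x)=f_0(x)+\epsilon\kappa(\omega)\bmod 1$. Let $\theta:\Omega\to\Omega$ be measurably invertible and nonsingular with respect to $\mathbb{P}$, and let $f^{(n)}_\omega=f_{\theta^{n-1}\omega}\circ\cdots\circ f_\omega$ ($f^{(0)}_\omega=\mathrm{id}_M$). Suppose that $\theta$ is non-historic. Then for $\mathbb{P}$-almost every $\omega$, the set of points of $I_0$ with historic behaviour at $\omega$ is empty (in particular, of zero Lebesgue measure).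
   Context: $\theta$ is nonsingular with respect to $\mathbb{P}$ if $\mathbb{P}(\theta^{-1}\Gamma)=1$ whenever $\Gamma$ is measurable with $\mathbb{P}(\Gamma)=1$. $\theta$ is historic if there is a measurable set $\Gamma$ with $\mathbb{P}(\Gamma)>0$ such that for each $\omega\in\Gamma$ there is an integrable function $b:\Omega\to\mathbb{R}$ for which $\lim_{n\to\infty}\frac1n\sum_{j=0}^{n-1}b(\theta^j\omega)$ does not exist; otherwise $\theta$ is non-historic. A point $x\in M$ has historic behaviour at $\omega$ if there is a continuous $\varphi:M\to\mathbb{R}$ such that $\lim_{n\to\infty}\frac1n\sum_{j=0}^{n-1}\varphi(f^{(j)}_\omega(x))$ does not exist. *)

theory Defs
  imports "HOL-Probability.Probability"
begin

text \<open>The circle M = R/Z is represented by the fundamental domain [0,1) of real numbers;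
  reduction mod 1 is frac. A continuous function on M is a continuous 1-periodic
  function on R.\<close>

definition circle_pt :: "real \<Rightarrow> bool" where
  "circle_pt x \<longleftrightarrow> 0 \<le> x \<and> x < 1"

definition Cr_fun :: "nat \<Rightarrow> (real \<Rightarrow> real) \<Rightarrow> bool" where
  "Cr_fun r F \<longleftrightarrow> (\<forall>k<r. \<forall>x. ((deriv ^^ k) F) differentiable (at x))
      \<and> continuous_on UNIV ((deriv ^^ r) F)"

text \<open>A C^r diffeomorphism of the circle, given on representatives in [0,1):
  it has a C^r lift F : R -> R of degree +1 or -1 with nowhere-vanishing derivative.\<close>
definition circle_Cr_diffeo :: "nat \<Rightarrow> (real \<Rightarrow> real) \<Rightarrow> bool" where
  "circle_Cr_diffeo r f \<longleftrightarrow> (\<exists>F d. Cr_fun r F \<and> (d = 1 \<or> d = -1)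
      \<and> (\<forall>x. F (x + 1) = F x + d) \<and> (\<forall>x. deriv F x \<noteq> 0)
      \<and> (\<forall>x. circle_pt x \<longrightarrow> f x = frac (F x)))"

definition circle_continuous :: "(real \<Rightarrow> real) \<Rightarrow> bool" where
  "circle_continuous \<phi> \<longleftrightarrow> continuous_on UNIV \<phi> \<and> (\<forall>x. \<phi> (x + 1) = \<phi> x)"

fun rcomp :: "('w \<Rightarrow> 'x \<Rightarrow> 'x) \<Rightarrow> ('w \<Rightarrow> 'w) \<Rightarrow> nat \<Rightarrow> 'w \<Rightarrow> 'x \<Rightarrow> 'x" where
  "rcomp f \<theta> 0 \<omega> = id"
| "rcomp f \<theta> (Suc n) \<omega> = f ((\<theta> ^^ n) \<omega>) \<circ> rcomp f \<theta> n \<omega>"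

definition measurably_invertible :: "'w measure \<Rightarrow> ('w \<Rightarrow> 'w) \<Rightarrow> bool" where
  "measurably_invertible P \<theta> \<longleftrightarrow> \<theta> \<in> P \<rightarrow>\<^sub>M P \<and> bij_betw \<theta> (space P) (space P)
     \<and> (\<exists>\<psi> \<in> P \<rightarrow>\<^sub>M P. \<forall>\<omega>\<in>space P. \<psi> (\<theta> \<omega>) = \<omega> \<and> \<theta> (\<psi> \<omega>) = \<omega>)"

definition nonsingular :: "'w measure \<Rightarrow> ('w \<Rightarrow> 'w) \<Rightarrow> bool" where
  "nonsingular P \<theta> \<longleftrightarrow> (\<forall>\<Gamma>\<in>sets P. measure P \<Gamma> = 1 \<longrightarrow> measure P (\<theta> -` \<Gamma> \<inter> space P) = 1)"

definition historic :: "'w measure \<Rightarrow> ('w \<Rightarrow> 'w) \<Rightarrow> bool" where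
  "historic P \<theta> \<longleftrightarrow> (\<exists>\<Gamma>\<in>sets P. measure P \<Gamma> > 0 \<and>
     (\<forall>\<omega>\<in>\<Gamma>. \<exists>b :: 'w \<Rightarrow> real. integrable P b \<and>
        \<not> convergent (\<lambda>n. (1 / real n) * (\<Sum>j<n. b ((\<theta> ^^ j) \<omega>)))))"

definition historic_behaviour_at ::
    "('w \<Rightarrow> real \<Rightarrow> real) \<Rightarrow> ('w \<Rightarrow> 'w) \<Rightarrow> 'w \<Rightarrow> real \<Rightarrow> bool" where
  "historic_behaviour_at f \<theta> \<omega> x \<longleftrightarrow> (\<exists>\<phi>. circle_continuous \<phi> \<and>
     \<not> convergent (\<lambda>n. (1 / real n) * (\<Sum>j<n. \<phi> (rcomp f \<theta> j \<omega> x))))"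

end

theory Submission
  imports Defs
begin

(* On I_0 every random map is the contraction x \<mapsto> x/2 + 1/4 + \<epsilon> \<kappa>(\<omega>) (no reduction mod 1
   occurs since \<epsilon> < 1/8), so orbits starting in I_0 stay there and any two of them approach
   each other like 2^-j. One orbit is explicit: the pullback attractor
   h(\<omega>) = \<Sum>_m 2^-m (1/4 + \<epsilon> \<kappa>(\<theta>^-(m+1) \<omega>)), which satisfies h(\<theta> \<omega>) = h(\<omega>)/2 + 1/4 + \<epsilon> \<kappa>(\<omega>).
   Since \<theta> is non-historic, the Birkhoff averages of each bounded function h^k converge almost
   surely; by Weierstrass approximation so do those of \<phi> \<circ> h for every continuous \<phi>, and by
   the exponential tracking these averages carry over to every orbit starting in I_0. *)

abbreviation cesaro_mean :: "(nat \<Rightarrow> real) \<Rightarrow> nat \<Rightarrow> real" where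
  "cesaro_mean X n \<equiv> 1 / real n * (\<Sum>j<n. X j)"

lemma measurable_funpow: "f \<in> M \<rightarrow>\<^sub>M M \<Longrightarrow> f ^^ n \<in> M \<rightarrow>\<^sub>M M"
  by (induction n) (auto simp: funpow_Suc_right intro: measurable_comp)

lemma cesaro_mean_tendsto_zero:
  assumes "d \<longlonglongrightarrow> 0"
  shows "cesaro_mean d \<longlonglongrightarrow> 0"
proof (rule LIMSEQ_I)
  fix e :: real assume e: "0 < e"
  obtain N where N: "\<And>j. j \<ge> N \<Longrightarrow> \<bar>d j\<bar> < e/2"
    using LIMSEQ_D[OF assms, of "e/2"] e by auto
  define C where "C = (\<Sum>j<N. \<bar>d j\<bar>)"
  obtain M where M: "real M > 2 * C / e" using reals_Archimedean2 by blast
  show "\<exists>no. \<forall>n\<ge>no. norm (cesaro_mean d n - 0) < e"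
  proof (intro exI allI impI)
    fix n assume n: "n \<ge> max (Suc M) N"
    have "\<bar>\<Sum>j<n. d j\<bar> \<le> (\<Sum>j<n. \<bar>d j\<bar>)" by (rule sum_abs)
    also have "\<dots> = C + (\<Sum>j\<in>{N..<n}. \<bar>d j\<bar>)"
      using n unfolding C_def by (simp add: lessThan_atLeast0 sum.atLeastLessThan_concat)
    also have "(\<Sum>j\<in>{N..<n}. \<bar>d j\<bar>) \<le> real (n - N) * (e/2)"
      using sum_bounded_above[of "{N..<n}" "\<lambda>j. \<bar>d j\<bar>" "e/2"] N by (auto intro: less_imp_le)
    also have "\<dots> \<le> real n * (e/2)" using e by (intro mult_right_mono) auto
    also have "C < real n * (e/2)"
    proof -
      have "2 * C / e < real n" using M n by simp
      with e show ?thesis by (simp add: field_simps)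
    qed
    finally have "\<bar>\<Sum>j<n. d j\<bar> < real n * e"
      by (simp add: mult.commute)
    with n show "norm (cesaro_mean d n - 0) < e"
      by (simp add: abs_mult field_simps)
  qed
qed

lemma convergent_cesaro_mean_polynomial:
  assumes "\<And>k. convergent (cesaro_mean (\<lambda>j. y j ^ k))"
  shows "convergent (cesaro_mean (\<lambda>j. \<Sum>i\<le>d. a i * y j ^ i))"
proof -
  have mean_eq: "cesaro_mean (\<lambda>j. \<Sum>i\<le>d. a i * y j ^ i) n
      = (\<Sum>i\<le>d. a i * cesaro_mean (\<lambda>j. y j ^ i) n)" for n
    by (simp add: sum_distrib_left sum.swap[of _ "{..<n}"] mult_ac)
  show ?thesis
    unfolding mean_eq by (intro convergent_sum convergent_mult convergent_const assms)
qed

lemma convergent_cesaro_mean_continuous_on: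
  fixes y :: "nat \<Rightarrow> real"
  assumes "compact S" and y: "\<And>j. y j \<in> S" and \<phi>: "continuous_on S \<phi>"
    and moments: "\<And>k. convergent (cesaro_mean (\<lambda>j. y j ^ k))"
  shows "convergent (cesaro_mean (\<lambda>j. \<phi> (y j)))"
proof -
  have "Cauchy (cesaro_mean (\<lambda>j. \<phi> (y j)))"
  proof (rule metric_CauchyI)
    fix e :: real assume e: "0 < e"
    obtain g where "polynomial_function g" and g: "\<And>x. x \<in> S \<Longrightarrow> \<bar>\<phi> x - g x\<bar> < e/3"
      using Stone_Weierstrass_polynomial_function[OF \<open>compact S\<close> \<phi>, of "e/3"] e by auto
    then obtain a d where g_eq: "g = (\<lambda>x. \<Sum>i\<le>d. a i * x ^ i)"
      using real_polynomial_function_imp_sum real_polynomial_function_eq by blast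
    have "Cauchy (cesaro_mean (\<lambda>j. g (y j)))"
      unfolding g_eq Cauchy_convergent_iff by (rule convergent_cesaro_mean_polynomial[OF moments])
    from metric_CauchyD[OF this, of "e/3"] e obtain M where M: "\<forall>m\<ge>M. \<forall>n\<ge>M.
        dist (cesaro_mean (\<lambda>j. g (y j)) m) (cesaro_mean (\<lambda>j. g (y j)) n) < e/3"
      by auto
    have close: "\<bar>cesaro_mean (\<lambda>j. \<phi> (y j)) n - cesaro_mean (\<lambda>j. g (y j)) n\<bar> \<le> e/3" for n
    proof (cases "n = 0")
      case False
      have "\<bar>\<Sum>j<n. \<phi> (y j) - g (y j)\<bar> \<le> (\<Sum>j<n. e/3)"
        by (rule order_trans[OF sum_abs sum_mono]) (use g y in \<open>auto intro: less_imp_le\<close>)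
      moreover have "cesaro_mean (\<lambda>j. \<phi> (y j)) n - cesaro_mean (\<lambda>j. g (y j)) n
          = (\<Sum>j<n. \<phi> (y j) - g (y j)) / real n"
        by (simp add: sum_subtractf diff_divide_distrib)
      ultimately show ?thesis
        using False by (simp add: abs_divide field_simps)
    qed (use e in simp)
    show "\<exists>M. \<forall>m\<ge>M. \<forall>n\<ge>M. dist (cesaro_mean (\<lambda>j. \<phi> (y j)) m) (cesaro_mean (\<lambda>j. \<phi> (y j)) n) < e"
    proof (intro exI allI impI)
      fix m n assume "m \<ge> M" "n \<ge> M"
      with M have "\<bar>cesaro_mean (\<lambda>j. g (y j)) m - cesaro_mean (\<lambda>j. g (y j)) n\<bar> < e/3"
        by (simp add: dist_real_def)
      with close[of m] close[of n]
      show "dist (cesaro_mean (\<lambda>j. \<phi> (y j)) m) (cesaro_mean (\<lambda>j. \<phi> (y j)) n) < e"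
        unfolding dist_real_def by linarith
    qed
  qed
  then show ?thesis
    by (simp add: Cauchy_convergent_iff)
qed

lemma convergent_cesaro_mean_asymptotic:
  fixes y z :: "nat \<Rightarrow> real"
  assumes "compact S" and y: "\<And>j. y j \<in> S" and z: "\<And>j. z j \<in> S"
    and \<phi>: "continuous_on S \<phi>" and "(\<lambda>j. z j - y j) \<longlonglongrightarrow> 0"
    and "convergent (cesaro_mean (\<lambda>j. \<phi> (y j)))"
  shows "convergent (cesaro_mean (\<lambda>j. \<phi> (z j)))"
proof -
  have "uniformly_continuous_on S \<phi>"
    using \<phi> \<open>compact S\<close> by (rule compact_uniformly_continuous)
  moreover have "(\<lambda>j. dist (z j) (y j)) \<longlonglongrightarrow> 0"
    using \<open>(\<lambda>j. z j - y j) \<longlonglongrightarrow> 0\<close> by (simp add: dist_real_def tendsto_rabs_zero)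
  ultimately have "(\<lambda>j. dist (\<phi> (z j)) (\<phi> (y j))) \<longlonglongrightarrow> 0"
    using y z unfolding uniformly_continuous_on_sequentially by blast
  then have "(\<lambda>j. \<phi> (z j) - \<phi> (y j)) \<longlonglongrightarrow> 0"
    by (simp add: dist_real_def tendsto_rabs_zero_iff)
  then have "convergent (\<lambda>n. cesaro_mean (\<lambda>j. \<phi> (y j)) n + cesaro_mean (\<lambda>j. \<phi> (z j) - \<phi> (y j)) n)"
    using assms(6) cesaro_mean_tendsto_zero convergent_add convergent_def by blast
  then show ?thesis
    by (simp add: sum_subtractf right_diff_distrib)
qed

lemma (in prob_space) nonsingular_AE_comp:
  assumes "nonsingular M \<theta>" "\<theta> \<in> M \<rightarrow>\<^sub>M M" and [measurable]: "Measurable.pred M Q"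
    and "AE \<omega> in M. Q \<omega>"
  shows "AE \<omega> in M. Q (\<theta> \<omega>)"
proof -
  have [measurable]: "\<theta> \<in> M \<rightarrow>\<^sub>M M" by fact
  have "{\<omega> \<in> space M. Q \<omega>} \<in> events" "prob {\<omega> \<in> space M. Q \<omega>} = 1"
    using assms(4) by (auto simp: prob_Collect_eq_1)
  moreover have "\<theta> -` {\<omega> \<in> space M. Q \<omega>} \<inter> space M = {\<omega> \<in> space M. Q (\<theta> \<omega>)}"
    using measurable_space[OF assms(2)] by auto
  ultimately have "prob {\<omega> \<in> space M. Q (\<theta> \<omega>)} = 1"
    using assms(1) unfolding nonsingular_def by metis
  then show ?thesis
    by (subst (asm) prob_Collect_eq_1) measurable
qed

lemma (in prob_space) nonsingular_AE_funpow:
  assumes "nonsingular M \<theta>" and \<theta>[measurable]: "\<theta> \<in> M \<rightarrow>\<^sub>M M" and [measurable]: "Measurable.pred M Q"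
    and "AE \<omega> in M. Q \<omega>"
  shows "AE \<omega> in M. Q ((\<theta> ^^ n) \<omega>)"
proof (induction n)
  case (Suc n)
  have [measurable]: "\<theta> ^^ n \<in> M \<rightarrow>\<^sub>M M"
    by (rule measurable_funpow[OF \<theta>])
  have "AE \<omega> in M. Q ((\<theta> ^^ n) (\<theta> \<omega>))"
    by (rule nonsingular_AE_comp[OF assms(1,2) _ Suc.IH]) measurable
  then show ?case
    by (simp only: funpow_Suc_right comp_apply)
qed (simp add: assms(4))

lemma (in prob_space) AE_convergent_cesaro_mean_if_not_historic:
  assumes "\<not> historic M \<theta>" and \<theta>: "\<theta> \<in> M \<rightarrow>\<^sub>M M" and b: "integrable M b"
  shows "AE \<omega> in M. convergent (cesaro_mean (\<lambda>j. b ((\<theta> ^^ j) \<omega>)))"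
proof -
  define C where "C = {\<omega> \<in> space M. convergent (cesaro_mean (\<lambda>j. b ((\<theta> ^^ j) \<omega>)))}"
  have [measurable]: "b \<in> borel_measurable M" "\<theta> ^^ j \<in> M \<rightarrow>\<^sub>M M" for j
    using b measurable_funpow[OF \<theta>] by auto
  have C: "C \<in> events"
    unfolding C_def Cauchy_convergent_iff[symmetric] by measurable
  have "prob (space M - C) = 0"
  proof (rule ccontr)
    assume "prob (space M - C) \<noteq> 0"
    then have "prob (space M - C) > 0"
      using measure_nonneg by (simp add: less_le)
    then have "historic M \<theta>"
      unfolding historic_def using C b by (intro bexI[of _ "space M - C"]) (auto simp: C_def)
    with assms(1) show False ..
  qed
  then have "AE \<omega> in M. \<omega> \<in> C"
    using C by (subst (asm) prob_eq_0) (auto elim: AE_mp intro!: AE_I2)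
  then show ?thesis
    by (rule AE_mp) (simp add: C_def)
qed

lemma equivariant_halving_solution_exists:
  fixes u :: "'a \<Rightarrow> real"
  assumes "measurably_invertible M \<theta>" and u[measurable]: "u \<in> borel_measurable M"
    and u_range: "\<And>\<omega>. u \<omega> \<in> {a..b}"
  obtains h where "h \<in> borel_measurable M" "\<And>\<omega>. h \<omega> \<in> {2*a..2*b}"
    "\<And>\<omega>. \<omega> \<in> space M \<Longrightarrow> h (\<theta> \<omega>) = h \<omega> / 2 + u \<omega>"
proof -
  obtain \<psi> where \<psi>[measurable]: "\<psi> \<in> M \<rightarrow>\<^sub>M M" and \<psi>_\<theta>: "\<And>\<omega>. \<omega> \<in> space M \<Longrightarrow> \<psi> (\<theta> \<omega>) = \<omega>"
    using assms(1) unfolding measurably_invertible_def by blast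
  define h where "h \<omega> = (\<Sum>m. (1/2::real)^m * u ((\<psi> ^^ Suc m) \<omega>))" for \<omega>
  have summable: "summable (\<lambda>m. (1/2::real)^m * u (g m))" for g
  proof (rule summable_comparison_test)
    show "\<exists>N. \<forall>m\<ge>N. norm ((1/2::real)^m * u (g m)) \<le> max \<bar>a\<bar> \<bar>b\<bar> * (1/2)^m"
    proof (intro exI allI impI)
      fix m
      have "\<bar>u (g m)\<bar> \<le> max \<bar>a\<bar> \<bar>b\<bar>"
        using u_range[of "g m"] by auto
      then show "norm ((1/2::real)^m * u (g m)) \<le> max \<bar>a\<bar> \<bar>b\<bar> * (1/2)^m"
        by (simp add: abs_mult mult.commute mult_left_mono)
    qed
  qed (intro summable_mult summable_geometric, simp)
  have [measurable]: "\<psi> ^^ m \<in> M \<rightarrow>\<^sub>M M" for m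
    by (rule measurable_funpow[OF \<psi>])
  have "h \<in> borel_measurable M"
    unfolding h_def by measurable
  moreover have "h \<omega> \<in> {2*a..2*b}" for \<omega>
  proof -
    have geometric: "(\<lambda>m. (1/2::real)^m * c) sums (2 * c)" for c
      using sums_mult2[OF geometric_sums[of "1/2::real"]] by simp
    have h_sums: "(\<lambda>m. (1/2::real)^m * u ((\<psi> ^^ Suc m) \<omega>)) sums h \<omega>"
      unfolding h_def by (rule summable_sums[OF summable])
    have "2 * a \<le> h \<omega>"
      by (rule sums_le[OF _ geometric h_sums]) (use u_range in \<open>simp add: mult_left_mono\<close>)
    moreover have "h \<omega> \<le> 2 * b"
      by (rule sums_le[OF _ h_sums geometric]) (use u_range in \<open>simp add: mult_left_mono\<close>)
    ultimately show ?thesis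
      by simp
  qed
  moreover have "h (\<theta> \<omega>) = h \<omega> / 2 + u \<omega>" if \<omega>: "\<omega> \<in> space M" for \<omega>
  proof -
    define g where "g m = (1/2::real)^m * u ((\<psi> ^^ m) \<omega>)" for m
    have "h (\<theta> \<omega>) = (\<Sum>m. g m)"
      unfolding h_def g_def by (simp only: funpow_Suc_right comp_apply \<psi>_\<theta>[OF \<omega>])
    also have "\<dots> = (\<Sum>m. g (Suc m)) + g 0"
      using suminf_split_head[of g] summable unfolding g_def by simp
    also have "(\<Sum>m. g (Suc m)) = (\<Sum>m. 1/2 * ((1/2::real)^m * u ((\<psi> ^^ Suc m) \<omega>)))"
      unfolding g_def by (simp only: power_Suc mult.assoc)
    also have "\<dots> = 1/2 * h \<omega>"
      unfolding h_def by (rule suminf_mult[OF summable])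
    finally show ?thesis
      by (simp add: g_def)
  qed
  ultimately show ?thesis
    using that by blast
qed

lemma halving_orbits_converge:
  fixes y z c :: "nat \<Rightarrow> real"
  assumes "\<And>j. z (Suc j) = z j / 2 + c j" "\<And>j. y (Suc j) = y j / 2 + c j"
  shows "(\<lambda>j. z j - y j) \<longlonglongrightarrow> 0"
proof -
  have "(\<lambda>j. z j - y j) = (\<lambda>j. (z 0 - y 0) * (1/2)^j)"
  proof
    show "z j - y j = (z 0 - y 0) * (1/2)^j" for j
      by (induction j) (simp_all add: assms field_simps)
  qed
  then show ?thesis
    by (simp only:) (intro tendsto_mult_right_zero LIMSEQ_realpow_zero, simp_all)
qed

lemma frac_halving_shift:
  fixes x c :: real
  assumes "x \<in> {1/4..3/4}" "c \<in> {1/8..3/8}"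
  shows "x/2 + c \<in> {1/4..3/4}" "frac (x/2 + c) = x/2 + c"
  using assms by (auto simp: frac_eq)

lemma small_shift_bound:
  fixes \<epsilon> t :: real
  assumes "0 \<le> \<epsilon>" "\<epsilon> \<le> 1/8" "\<bar>t\<bar> \<le> 1"
  shows "1/4 + \<epsilon> * t \<in> {1/8..3/8}"
proof -
  have "\<bar>\<epsilon> * t\<bar> \<le> \<epsilon>"
    using assms by (simp add: abs_mult mult_left_le)
  with assms show ?thesis
    by (auto simp: abs_le_iff)
qed

text \<open>Truncating \<kappa> to [-1, 1] makes the attractor defined everywhere without changing
  its recursion wherever the noise is admissible.\<close>
lemma random_attractor_exists:
  fixes \<kappa> :: "'w \<Rightarrow> real"
  assumes "measurably_invertible M \<theta>" "\<kappa> \<in> borel_measurable M" "0 \<le> \<epsilon>" "\<epsilon> \<le> 1/8"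
  obtains h where "h \<in> borel_measurable M" "\<And>\<omega>. h \<omega> \<in> {1/4..3/4}"
    "\<And>\<omega>. \<omega> \<in> space M \<Longrightarrow> \<bar>\<kappa> \<omega>\<bar> \<le> 1 \<Longrightarrow> h (\<theta> \<omega>) = h \<omega> / 2 + (1/4 + \<epsilon> * \<kappa> \<omega>)"
proof -
  define k where "k \<omega> = max (-1) (min 1 (\<kappa> \<omega>))" for \<omega>
  have "(\<lambda>\<omega>. 1/4 + \<epsilon> * k \<omega>) \<in> borel_measurable M"
    using assms(2) unfolding k_def by measurable
  moreover have "1/4 + \<epsilon> * k \<omega> \<in> {1/8..3/8}" for \<omega>
    using assms(3,4) by (rule small_shift_bound) (simp add: k_def)
  ultimately obtain h where "h \<in> borel_measurable M" and "\<And>\<omega>. h \<omega> \<in> {2 * (1/8)..2 * (3/8)}"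
    and "\<And>\<omega>. \<omega> \<in> space M \<Longrightarrow> h (\<theta> \<omega>) = h \<omega> / 2 + (1/4 + \<epsilon> * k \<omega>)"
    using equivariant_halving_solution_exists[OF assms(1)] by blast
  moreover have "k \<omega> = \<kappa> \<omega>" if "\<bar>\<kappa> \<omega>\<bar> \<le> 1" for \<omega>
    using that by (simp add: k_def abs_le_iff)
  ultimately show ?thesis
    using that by simp
qed

lemma rcomp_affine_orbit:
  fixes f0 :: "real \<Rightarrow> real" and \<kappa> :: "'w \<Rightarrow> real"
  assumes f0: "\<forall>x\<in>{1/4..3/4}. f0 x = x / 2 + 1 / 4" and "0 \<le> \<epsilon>" "\<epsilon> \<le> 1/8"
    and \<kappa>: "\<And>j. \<bar>\<kappa> ((\<theta> ^^ j) \<omega>)\<bar> \<le> 1" and x: "x \<in> {1/4..3/4}"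
  defines "z j \<equiv> rcomp (\<lambda>\<omega>' y. frac (f0 y + \<epsilon> * \<kappa> \<omega>')) \<theta> j \<omega> x"
  shows "z j \<in> {1/4..3/4}" and "z (Suc j) = z j / 2 + (1/4 + \<epsilon> * \<kappa> ((\<theta> ^^ j) \<omega>))"
proof -
  note shift = small_shift_bound[OF assms(2,3) \<kappa>]
  have step: "z (Suc j) = z j / 2 + (1/4 + \<epsilon> * \<kappa> ((\<theta> ^^ j) \<omega>))" if "z j \<in> {1/4..3/4}" for j
    using that f0 frac_halving_shift(2)[OF that shift] by (simp add: z_def add.assoc)
  show z_range: "z j \<in> {1/4..3/4}" for j
  proof (induction j)
    case 0
    show ?case using x by (simp add: z_def)
  next
    case (Suc j)
    show ?case using step[OF Suc] frac_halving_shift(1)[OF Suc shift] by simp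
  qed
  show "z (Suc j) = z j / 2 + (1/4 + \<epsilon> * \<kappa> ((\<theta> ^^ j) \<omega>))"
    by (rule step[OF z_range])
qed

lemma not_historic_behaviour_at_if_moments_converge:
  fixes f0 :: "real \<Rightarrow> real" and y :: "nat \<Rightarrow> real" and \<kappa> :: "'w \<Rightarrow> real"
  assumes f0: "\<forall>x\<in>{1/4..3/4}. f0 x = x / 2 + 1 / 4" and \<epsilon>: "0 \<le> \<epsilon>" "\<epsilon> \<le> 1/8"
    and \<kappa>: "\<And>j. \<bar>\<kappa> ((\<theta> ^^ j) \<omega>)\<bar> \<le> 1"
    and y_range: "\<And>j. y j \<in> {1/4..3/4}"
    and y_rec: "\<And>j. y (Suc j) = y j / 2 + (1/4 + \<epsilon> * \<kappa> ((\<theta> ^^ j) \<omega>))"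
    and moments: "\<And>i. convergent (cesaro_mean (\<lambda>j. y j ^ i))"
    and x: "x \<in> {1/4..3/4}"
  shows "\<not> historic_behaviour_at (\<lambda>\<omega>' y. frac (f0 y + \<epsilon> * \<kappa> \<omega>')) \<theta> \<omega> x"
proof -
  define z where "z j = rcomp (\<lambda>\<omega>' y. frac (f0 y + \<epsilon> * \<kappa> \<omega>')) \<theta> j \<omega> x" for j
  have z_range: "z j \<in> {1/4..3/4}" and z_rec: "z (Suc j) = z j / 2 + (1/4 + \<epsilon> * \<kappa> ((\<theta> ^^ j) \<omega>))" for j
    unfolding z_def by (rule rcomp_affine_orbit[where \<kappa>=\<kappa> and \<theta>=\<theta>, OF f0 \<epsilon> \<kappa> x])+
  have "convergent (cesaro_mean (\<lambda>j. \<phi> (z j)))" if "circle_continuous \<phi>" for \<phi>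
  proof -
    have \<phi>: "continuous_on {1/4..3/4} \<phi>"
      using that continuous_on_subset by (auto simp: circle_continuous_def)
    have "(\<lambda>j. z j - y j) \<longlonglongrightarrow> 0"
      using z_rec y_rec by (rule halving_orbits_converge)
    moreover have "convergent (cesaro_mean (\<lambda>j. \<phi> (y j)))"
      by (rule convergent_cesaro_mean_continuous_on[OF compact_Icc y_range \<phi> moments])
    ultimately show ?thesis
      by (rule convergent_cesaro_mean_asymptotic[OF compact_Icc, where y=y and z=z, OF y_range z_range \<phi>])
  qed
  then show ?thesis
    unfolding historic_behaviour_at_def z_def by blast
qed

theorem proposition1p3:
  fixes P :: "'w measure" and f0 :: "real \<Rightarrow> real" and \<kappa> :: "'w \<Rightarrow> real"
    and \<theta> :: "'w \<Rightarrow> 'w" and \<epsilon> :: real and r :: nat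
  assumes "prob_space P"
    and "r \<ge> 1"
    and "circle_Cr_diffeo r f0"
    and "\<forall>x\<in>{1/4..3/4}. f0 x = x / 2 + 1 / 4"
    and "\<kappa> \<in> borel_measurable P"
    and "AE \<omega> in P. -1 \<le> \<kappa> \<omega> \<and> \<kappa> \<omega> \<le> 1"
    and "0 < \<epsilon>" and "\<epsilon> < 1/8"
    and "measurably_invertible P \<theta>"
    and "nonsingular P \<theta>"
    and "\<not> historic P \<theta>"
  shows "AE \<omega> in P. {x \<in> {1/4..3/4}.
            historic_behaviour_at (\<lambda>\<omega>' y. frac (f0 y + \<epsilon> * \<kappa> \<omega>')) \<theta> \<omega> x} = {}"
proof -
  \<comment> \<open>The regularity of f0 off I_0 is irrelevant: orbits starting in I_0 never leave it.\<close>
  interpret prob_space P by fact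
  have \<theta>[measurable]: "\<theta> \<in> P \<rightarrow>\<^sub>M P" and [measurable]: "\<kappa> \<in> borel_measurable P"
    using assms(5,9) by (auto simp: measurably_invertible_def)
  have \<epsilon>: "0 \<le> \<epsilon>" "\<epsilon> \<le> 1/8"
    using assms(7,8) by simp_all
  obtain h where [measurable]: "h \<in> borel_measurable P" and h_range: "\<And>\<omega>. h \<omega> \<in> {1/4..3/4}"
    and h_rec: "\<And>\<omega>. \<omega> \<in> space P \<Longrightarrow> \<bar>\<kappa> \<omega>\<bar> \<le> 1 \<Longrightarrow> h (\<theta> \<omega>) = h \<omega> / 2 + (1/4 + \<epsilon> * \<kappa> \<omega>)"
    using random_attractor_exists[OF assms(9,5) \<epsilon>] by blast
  have "AE \<omega> in P. \<forall>j. -1 \<le> \<kappa> ((\<theta> ^^ j) \<omega>) \<and> \<kappa> ((\<theta> ^^ j) \<omega>) \<le> 1"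
    unfolding AE_all_countable
    by (intro allI nonsingular_AE_funpow[OF assms(10) \<theta> _ assms(6)]) measurable
  moreover have "AE \<omega> in P. \<forall>i. convergent (cesaro_mean (\<lambda>j. h ((\<theta> ^^ j) \<omega>) ^ i))"
  proof (unfold AE_all_countable, intro allI AE_convergent_cesaro_mean_if_not_historic[OF assms(11) \<theta>])
    show "integrable P (\<lambda>\<omega>. h \<omega> ^ i)" for i
    proof (rule integrable_const_bound[where B=1])
      have "\<bar>h \<omega>\<bar> \<le> 1" for \<omega>
        using h_range[of \<omega>] by auto
      then show "AE \<omega> in P. norm (h \<omega> ^ i) \<le> 1"
        by (simp add: power_abs power_le_one)
    qed measurable
  qed
  ultimately show ?thesis
    using AE_space
  proof eventually_elim
    case (elim \<omega>)
    then have \<kappa>: "\<bar>\<kappa> ((\<theta> ^^ j) \<omega>)\<bar> \<le> 1" for j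
      by (simp add: abs_le_iff)
    have "(\<theta> ^^ j) \<omega> \<in> space P" for j
      using measurable_space[OF measurable_funpow[OF \<theta>]] elim by blast
    then have "h ((\<theta> ^^ Suc j) \<omega>) = h ((\<theta> ^^ j) \<omega>) / 2 + (1/4 + \<epsilon> * \<kappa> ((\<theta> ^^ j) \<omega>))" for j
      using h_rec \<kappa> by simp
    then show ?case
      using not_historic_behaviour_at_if_moments_converge[where \<kappa>=\<kappa> and \<theta>=\<theta> and \<omega>=\<omega>
        and y="\<lambda>j. h ((\<theta> ^^ j) \<omega>)", OF assms(4) \<epsilon> \<kappa>]
        h_range elim by auto
  qed
qed

end
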